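(* For all $t\ge1$ and all $\mathbf{x}\in\mathcal{X}$, \[ \frac{\sigma_{\mathrm{fb}[t]}(\mathbf{x})}{\sigma_{t-1}(\mathbf{x})}\le e^{C}. \]
   Context: $\mathcal{X}$ is a finite subset of the unit ball; $f\sim\mathcal{GP}(0,k)$; noisy observations with noise $\mathcal{N}(0,\sigma^2)$. Queries $\mathbf{x}_1,\mathbf{x}_2,\dots$ are chosen in batches of size $B$ and indexed sequentially; $\mathrm{fb}[t]$ is the largest index whose observation is available when $\mathbf{x}_t$ is chosen, with $t-\mathrm{fb}[t]\le B$. $\sigma_{\mathrm{fb}[t]}(\mathbf{x})$ is the GP posterior standard deviation at $\mathbf{x}$ given the queries $1,\dots,\mathrm{fb}[t]$, and $\sigma_{t-1}(\mathbf{x})$ that given the queries $1,\dots,t-1$. $C$ is a constant with $\max_{A\subset\mathcal{X},|A|\le B-1}\mathbb{I}(f;\mathbf{y}_A\mid\mathbf{y}_{1:\mathrm{fb}[t]})\le C$ for all $t\ge1$, where $\mathbf{y}_A$ are noisy observations at $A$, $\mathbf{y}_{1:\mathrm{fb}[t]}$ the observations with indices $1,\dots,\mathrm{fb}[t]$, and $\mathbb{I}$ mutual information. *)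

theory Defs
  imports Complex_Main "Jordan_Normal_Form.Determinant" "Jordan_Normal_Form.Gauss_Jordan_Elimination"
begin

definition gram :: "('a \<Rightarrow> 'a \<Rightarrow> real) \<Rightarrow> 'a list \<Rightarrow> real mat" where
  "gram k D = mat (length D) (length D) (\<lambda>(i,j). k (D ! i) (D ! j))"

definition kvec :: "('a \<Rightarrow> 'a \<Rightarrow> real) \<Rightarrow> 'a list \<Rightarrow> 'a \<Rightarrow> real vec" where
  "kvec k D x = vec (length D) (\<lambda>i. k (D ! i) x)"

definition post_cov :: "('a \<Rightarrow> 'a \<Rightarrow> real) \<Rightarrow> real \<Rightarrow> 'a list \<Rightarrow> 'a \<Rightarrow> 'a \<Rightarrow> real" where
  "post_cov k s2 D x y =
     k x y - kvec k D x \<bullet> (the (mat_inverse (gram k D + s2 \<cdot>\<^sub>m 1\<^sub>m (length D))) *\<^sub>v kvec k D y)"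

definition post_sd :: "('a \<Rightarrow> 'a \<Rightarrow> real) \<Rightarrow> real \<Rightarrow> 'a list \<Rightarrow> 'a \<Rightarrow> real" where
  "post_sd k s2 D x = sqrt (post_cov k s2 D x x)"

definition queries :: "(nat \<Rightarrow> 'a) \<Rightarrow> nat \<Rightarrow> 'a list" where
  "queries xs n = map xs [1..<Suc n]"

text \<open>Conditional mutual information I(f; y_A | y_D) for the GP model with Gaussian
  noise of variance s2 (closed form for jointly Gaussian variables, natural log):
  1/2 log det (I + s2^{-1} K_A^{(D)}), with K_A^{(D)} the posterior covariance matrix on A.\<close>
definition cond_mi :: "('a \<Rightarrow> 'a \<Rightarrow> real) \<Rightarrow> real \<Rightarrow> 'a list \<Rightarrow> 'a list \<Rightarrow> real" where
  "cond_mi k s2 A D =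
     ln (det (1\<^sub>m (length A) + (1 / s2) \<cdot>\<^sub>m
          mat (length A) (length A) (\<lambda>(i,j). post_cov k s2 D (A ! i) (A ! j)))) / 2"

definition psd_kernel :: "'a set \<Rightarrow> ('a \<Rightarrow> 'a \<Rightarrow> real) \<Rightarrow> bool" where
  "psd_kernel X k \<longleftrightarrow> (\<forall>x\<in>X. \<forall>y\<in>X. k x y = k y x) \<and>
     (\<forall>P c. set P \<subseteq> X \<longrightarrow>
        (\<Sum>i<length P. \<Sum>j<length P. c i * c j * k (P ! i) (P ! j)) \<ge> 0)"

end

theory Submission
  imports Defs
begin

(* Conditioning the posterior on one more observation at a is the rank-one update
     P_{D@[a]}(p,q) = P_D(p,q) - P_D(p,a) P_D(a,q) / (P_D(a,a) + s2).
   By Cauchy-Schwarz for the positive semidefinite kernel P_D it shrinks the variance at x by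
   at most the factor (P_D(a,a) + s2) / s2, and a Schur complement splits off exactly this factor
   from det (I + K_A^(D) / s2) when a is the first point of A.  Along the batch A the variance
   at x therefore shrinks by at most det (I + K_A^(D) / s2) = exp (2 I(f; y_A | y_D)) <= exp (2 C),
   and taking square roots gives the bound. *)

lemma det_mat_Suc_schur_complement:
  fixes f :: "nat \<times> nat \<Rightarrow> 'a :: field"
  assumes pivot: "f (0,0) \<noteq> 0"
  shows "det (mat (Suc n) (Suc n) f) =
    f (0,0) * det (mat n n (\<lambda>(i,j). f (Suc i, Suc j) - f (Suc i, 0) * f (0, Suc j) / f (0,0)))"
proof -
  define M where "M = mat (Suc n) (Suc n) f"
  define S where "S = mat n n (\<lambda>(i,j). f (Suc i, Suc j) - f (Suc i, 0) * f (0, Suc j) / f (0,0))"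
  define E where "E = mat (Suc n) (Suc n)
    (\<lambda>(i,j). if i = j then 1 else if j = 0 then - f (i,0) / f (0,0) else 0)"
  define R where "R = four_block_mat (mat 1 1 (\<lambda>_. f (0,0))) (mat 1 n (\<lambda>(_,j). f (0, Suc j))) (0\<^sub>m n 1) S"
  have E: "E \<in> carrier_mat (Suc n) (Suc n)" and M: "M \<in> carrier_mat (Suc n) (Suc n)"
    unfolding E_def M_def by auto
  have "det E = prod_list (diag_mat E)"
    by (rule det_lower_triangular[OF _ E]) (auto simp: E_def)
  also have "diag_mat E = map (\<lambda>_. 1) [0..<Suc n]"
    unfolding diag_mat_def using E by (intro map_cong) (auto simp: E_def)
  finally have det_E: "det E = 1" by (simp add: map_replicate_const)
  have "E * M = R"
  proof (rule eq_matI)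
    fix i j assume "i < dim_row R" "j < dim_col R"
    hence i: "i < Suc n" and j: "j < Suc n" by (auto simp: R_def S_def)
    have "(E * M) $$ (i,j) = (\<Sum>l<Suc n. E $$ (i,l) * f (l,j))"
      using i j by (simp add: E_def M_def scalar_prod_def atLeast0LessThan)
    also have "\<dots> = (\<Sum>l<Suc n. (if l = i then f (i,j) else 0)
        + (if l = 0 \<and> i \<noteq> 0 then - f (i,0) / f (0,0) * f (0,j) else 0))"
      using i by (intro sum.cong) (auto simp: E_def)
    also have "\<dots> = R $$ (i,j)"
      using i j pivot by (auto simp: sum.distrib R_def S_def four_block_mat_def field_simps)
    finally show "(E * M) $$ (i,j) = R $$ (i,j)" .
  qed (auto simp: E_def M_def R_def S_def)
  hence "det M = det R"
    using det_mult[OF E M] det_E by simp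
  also have "\<dots> = f (0,0) * det S"
    unfolding R_def by (subst det_four_block_mat_lower_left_zero_col) (auto simp: S_def det_def)
  finally show ?thesis by (simp add: M_def S_def)
qed

lemma mat_inverse_of_det_nonzero:
  assumes A: "A \<in> carrier_mat n n" and det: "det A \<noteq> (0 :: 'a :: field)"
  obtains B where "mat_inverse A = Some B" "A * B = 1\<^sub>m n" "B * A = 1\<^sub>m n" "B \<in> carrier_mat n n"
proof (cases "mat_inverse A")
  case None
  have "A \<in> Units (ring_mat TYPE('a) n ())"
    by (rule det_non_zero_imp_unit[OF A det])
  with mat_inverse(1)[OF A None, of "()"] show ?thesis by contradiction
next
  case (Some B)
  with mat_inverse(2)[OF A] that show ?thesis by blast
qed

lemma mat_mult_vec_solvable:
  assumes A: "A \<in> carrier_mat n n" and det: "det A \<noteq> (0 :: 'a :: field)"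
    and b: "b \<in> carrier_vec n"
  obtains w where "w \<in> carrier_vec n" "A *\<^sub>v w = b"
proof -
  obtain B where B: "A * B = 1\<^sub>m n" "B \<in> carrier_mat n n"
    using mat_inverse_of_det_nonzero[OF A det] by metis
  have "A *\<^sub>v (B *\<^sub>v b) = b"
    using B b by (simp flip: assoc_mult_mat_vec[OF A B(2) b])
  with B(2) b that show ?thesis
    by (metis mult_mat_vec_carrier)
qed

lemma psd_kernel_sym: "psd_kernel X K \<Longrightarrow> x \<in> X \<Longrightarrow> y \<in> X \<Longrightarrow> K x y = K y x"
  unfolding psd_kernel_def by blast

lemma psd_kernel_cong:
  assumes "\<And>x y. x \<in> X \<Longrightarrow> y \<in> X \<Longrightarrow> K x y = K' x y"
  shows "psd_kernel X K \<longleftrightarrow> psd_kernel X K'"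
proof -
  have "(\<Sum>i<length P. \<Sum>j<length P. c i * c j * K (P!i) (P!j))
      = (\<Sum>i<length P. \<Sum>j<length P. c i * c j * K' (P!i) (P!j))" if "set P \<subseteq> X" for P c
    using that assms by (auto intro!: sum.cong simp: subset_iff)
  with assms show ?thesis
    unfolding psd_kernel_def by auto
qed

lemma psd_kernel_quadratic_snoc:
  assumes psd: "psd_kernel X K" and P: "set P \<subseteq> X" and d: "d \<in> X"
  shows "(\<Sum>i<length P. \<Sum>j<length P. c i * c j * K (P!i) (P!j))
           - 2 * l * (\<Sum>i<length P. c i * K (P!i) d) + l^2 * K d d \<ge> 0"
proof -
  let ?n = "length P"
  define c' where "c' i = (if i < ?n then c i else - l)" for i
  have "set (P @ [d]) \<subseteq> X" using P d by auto
  hence "0 \<le> (\<Sum>i<length (P @ [d]). \<Sum>j<length (P @ [d]). c' i * c' j * K ((P @ [d])!i) ((P @ [d])!j))"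
    using psd unfolding psd_kernel_def by blast
  also have "\<dots> = (\<Sum>i<?n. (\<Sum>j<?n. c i * c j * K (P!i) (P!j)) - l * (c i * K (P!i) d))
      + (- l * (\<Sum>j<?n. c j * K d (P!j)) + l^2 * K d d)"
    by (simp add: c'_def nth_append sum_distrib_left power2_eq_square mult_ac)
  also have "\<dots> = (\<Sum>i<?n. \<Sum>j<?n. c i * c j * K (P!i) (P!j))
      - l * (\<Sum>i<?n. c i * K (P!i) d) - l * (\<Sum>j<?n. c j * K d (P!j)) + l^2 * K d d"
    by (simp add: sum_subtractf sum_distrib_left sum_negf)
  also have "(\<Sum>j<?n. c j * K d (P!j)) = (\<Sum>i<?n. c i * K (P!i) d)"
    using P by (intro sum.cong refl) (auto intro!: psd_kernel_sym[OF psd d])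
  finally show ?thesis by simp
qed

lemma psd_kernel_diag_nonneg: "psd_kernel X K \<Longrightarrow> d \<in> X \<Longrightarrow> K d d \<ge> 0"
  using psd_kernel_quadratic_snoc[of X K "[]" d "\<lambda>_. 0" 1] by simp

lemma psd_kernel_cauchy_schwarz:
  assumes psd: "psd_kernel X K" and x: "x \<in> X" and a: "a \<in> X"
  shows "(K x a)^2 \<le> K x x * K a a"
proof -
  have quad: "K x x - 2 * l * K x a + l^2 * K a a \<ge> 0" for l
    using psd_kernel_quadratic_snoc[OF psd _ a, of "[x]" "\<lambda>_. 1" l] x by simp
  show ?thesis
  proof (cases "K a a = 0")
    case True
    with quad[of "(K x x + 1) / (2 * K x a)"] have "K x a = 0"
      by (cases "K x a = 0") (simp_all add: field_simps)
    with True show ?thesis by simp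
  next
    case False
    with psd_kernel_diag_nonneg[OF psd a] have pos: "K a a > 0" by simp
    from quad[of "K x a / K a a"] pos show ?thesis
      by (simp add: field_simps power2_eq_square)
  qed
qed

lemma psd_kernel_rank_one_update:
  assumes psd: "psd_kernel X K" and d: "d \<in> X" and \<beta>: "K d d \<le> \<beta>" "0 < \<beta>"
  shows "psd_kernel X (\<lambda>x y. K x y - K x d * K d y / \<beta>)"
  unfolding psd_kernel_def
proof (intro conjI ballI allI impI)
  fix x y assume "x \<in> X" "y \<in> X"
  with psd d show "K x y - K x d * K d y / \<beta> = K y x - K y d * K d x / \<beta>"
    by (simp add: psd_kernel_sym[of X K])
next
  fix P :: "'a list" and c assume P: "set P \<subseteq> X"
  let ?n = "length P"
  define S where "S = (\<Sum>i<?n. c i * K (P!i) d)"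
  define Q where "Q = (\<Sum>i<?n. \<Sum>j<?n. c i * c j * K (P!i) (P!j))"
  have "(\<Sum>i<?n. \<Sum>j<?n. c i * c j * (K (P!i) (P!j) - K (P!i) d * K d (P!j) / \<beta>))
      = Q - (\<Sum>i<?n. \<Sum>j<?n. (c i * K (P!i) d) * (c j * K (P!j) d)) / \<beta>"
    using P psd d
    by (auto simp: Q_def subset_iff psd_kernel_sym[of X K _ d] sum_subtractf sum_divide_distrib
        algebra_simps intro!: sum.cong)
  also have "\<dots> = Q - S^2 / \<beta>"
    by (simp add: S_def power2_eq_square sum_product)
  finally have form: "(\<Sum>i<?n. \<Sum>j<?n. c i * c j * (K (P!i) (P!j) - K (P!i) d * K d (P!j) / \<beta>))
      = Q - S^2 / \<beta>" .
  have "0 \<le> Q - 2 * (S / \<beta>) * S + (S / \<beta>)^2 * K d d"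
    using psd_kernel_quadratic_snoc[OF psd P d, of c "S / \<beta>"] by (simp add: Q_def S_def)
  also have "\<dots> \<le> Q - 2 * (S / \<beta>) * S + (S / \<beta>)^2 * \<beta>"
    using \<beta>(1) by (simp add: mult_left_mono)
  also have "\<dots> = Q - S^2 / \<beta>"
    using \<beta>(2) by (simp add: field_simps power2_eq_square)
  finally show "0 \<le> (\<Sum>i<?n. \<Sum>j<?n. c i * c j * (K (P!i) (P!j) - K (P!i) d * K d (P!j) / \<beta>))"
    unfolding form .
qed

definition reg_gram :: "('a \<Rightarrow> 'a \<Rightarrow> real) \<Rightarrow> real \<Rightarrow> 'a list \<Rightarrow> real mat" where
  "reg_gram k s2 D = gram k D + s2 \<cdot>\<^sub>m 1\<^sub>m (length D)"

lemma reg_gram_carrier: "reg_gram k s2 D \<in> carrier_mat (length D) (length D)"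
  by (simp add: reg_gram_def gram_def)

lemma reg_gram_mult_vec_nth:
  assumes i: "i < length D" and w: "w \<in> carrier_vec (length D)"
  shows "(reg_gram k s2 D *\<^sub>v w) $ i = (\<Sum>j<length D. k (D!i) (D!j) * w $ j) + s2 * w $ i"
proof -
  have "(reg_gram k s2 D *\<^sub>v w) $ i
      = (\<Sum>j<length D. k (D!i) (D!j) * w $ j + s2 * (of_bool (j = i) * w $ j))"
    using i w by (auto simp: reg_gram_def gram_def scalar_prod_def atLeast0LessThan algebra_simps intro!: sum.cong)
  also have "\<dots> = (\<Sum>j<length D. k (D!i) (D!j) * w $ j) + s2 * w $ i"
    using i by (simp add: sum.distrib flip: sum_distrib_left)
  finally show ?thesis .
qed

lemma kvec_scalar_prod:
  "w \<in> carrier_vec (length D) \<Longrightarrow> kvec k D p \<bullet> w = (\<Sum>i<length D. k (D!i) p * w $ i)"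
  by (simp add: kvec_def scalar_prod_def atLeast0LessThan)

lemma det_reg_gram_nonzero:
  assumes psd: "psd_kernel X k" and s2: "s2 > 0" and D: "set D \<subseteq> X"
  shows "det (reg_gram k s2 D) \<noteq> 0"
proof
  let ?n = "length D"
  assume "det (reg_gram k s2 D) = 0"
  then obtain v where v: "v \<in> carrier_vec ?n" "v \<noteq> 0\<^sub>v ?n" and Kv: "reg_gram k s2 D *\<^sub>v v = 0\<^sub>v ?n"
    using det_0_iff_vec_prod_zero[OF reg_gram_carrier] by blast
  have "0 = (\<Sum>i<?n. v $ i * (reg_gram k s2 D *\<^sub>v v) $ i)"
    using Kv by simp
  also have "\<dots> = (\<Sum>i<?n. v $ i * (\<Sum>j<?n. k (D!i) (D!j) * v $ j) + s2 * (v $ i)^2)"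
    by (intro sum.cong refl) (simp add: reg_gram_mult_vec_nth[OF _ v(1)] algebra_simps power2_eq_square)
  also have "\<dots> = (\<Sum>i<?n. \<Sum>j<?n. v $ i * v $ j * k (D!i) (D!j)) + s2 * (\<Sum>i<?n. (v $ i)^2)"
    by (simp add: sum.distrib sum_distrib_left mult_ac)
  finally have "s2 * (\<Sum>i<?n. (v $ i)^2) \<le> 0"
    using psd[unfolded psd_kernel_def, THEN conjunct2, rule_format, OF D, of "\<lambda>i. v $ i"] by linarith
  with s2 have "(\<Sum>i<?n. (v $ i)^2) = 0"
    by (simp add: mult_le_0_iff sum_nonneg order.antisym)
  hence "v = 0\<^sub>v ?n"
    using v(1) by (intro eq_vecI) (auto simp: sum_nonneg_eq_0_iff)
  with v(2) show False ..
qed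

lemma post_cov_eq_solution:
  assumes inv: "det (reg_gram k s2 D) \<noteq> 0"
    and w: "w \<in> carrier_vec (length D)" and sol: "reg_gram k s2 D *\<^sub>v w = kvec k D q"
  shows "post_cov k s2 D p q = k p q - kvec k D p \<bullet> w"
proof -
  obtain B where B: "mat_inverse (reg_gram k s2 D) = Some B" "B * reg_gram k s2 D = 1\<^sub>m (length D)"
      "B \<in> carrier_mat (length D) (length D)"
    using mat_inverse_of_det_nonzero[OF reg_gram_carrier inv] .
  have "B *\<^sub>v kvec k D q = w"
    using B(2) w by (simp flip: sol assoc_mult_mat_vec[OF B(3) reg_gram_carrier w])
  with B(1) show ?thesis
    by (simp add: post_cov_def flip: reg_gram_def)
qed

lemma post_cov_Nil: "post_cov k s2 [] p q = k p q"
proof -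
  have "reg_gram k s2 [] *\<^sub>v vec 0 (\<lambda>_. 0) = kvec k [] q"
    by (rule eq_vecI) (simp_all add: reg_gram_def gram_def kvec_def)
  moreover have "det (reg_gram k s2 []) = 1"
    using reg_gram_carrier[of k s2 "[]"] by simp
  ultimately show ?thesis
    using post_cov_eq_solution[of k s2 "[]" "vec 0 (\<lambda>_. 0)"] by (simp add: kvec_scalar_prod)
qed

(* Block elimination: the solution for D @ [d] corrects the one for D along the solution
   for d, with c the ratio of the new pivot. *)
lemma reg_gram_snoc_solution:
  assumes psd: "psd_kernel X k" and D: "set D \<subseteq> X" and d: "d \<in> X"
    and uq: "uq \<in> carrier_vec (length D)" "reg_gram k s2 D *\<^sub>v uq = kvec k D q"
    and ud: "ud \<in> carrier_vec (length D)" "reg_gram k s2 D *\<^sub>v ud = kvec k D d"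
    and c: "c * (k d d - kvec k D d \<bullet> ud + s2) = k d q - kvec k D d \<bullet> uq"
  shows "reg_gram k s2 (D @ [d]) *\<^sub>v vec (Suc (length D)) (\<lambda>i. if i < length D then uq $ i - c * ud $ i else c)
    = kvec k (D @ [d]) q" (is "_ *\<^sub>v ?w = _")
proof (rule eq_vecI)
  let ?m = "length D"
  fix i assume "i < dim_vec (kvec k (D @ [d]) q)"
  hence i: "i < Suc ?m" by (simp add: kvec_def)
  let ?y = "(D @ [d]) ! i"
  have solves: "(\<Sum>j<?m. k (D!i) (D!j) * u $ j) + s2 * u $ i = k (D!i) b"
    if "i < ?m" "u \<in> carrier_vec ?m" "reg_gram k s2 D *\<^sub>v u = kvec k D b" for u b
    using that reg_gram_mult_vec_nth[OF that(1,2), of k s2] by (simp add: kvec_def)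
  have "(reg_gram k s2 (D @ [d]) *\<^sub>v ?w) $ i = (\<Sum>j<?m. k ?y (D!j) * uq $ j)
      - c * (\<Sum>j<?m. k ?y (D!j) * ud $ j) + c * k ?y d + s2 * ?w $ i"
    using i by (simp add: reg_gram_mult_vec_nth nth_append sum_distrib_left sum_subtractf algebra_simps)
  also have "\<dots> = k ?y q"
  proof (cases "i < ?m")
    case True
    with solves[OF True uq, symmetric] solves[OF True ud, symmetric] show ?thesis
      by (simp add: nth_append algebra_simps)
  next
    case False
    with i have "i = ?m" by simp
    have "(\<Sum>j<?m. k d (D!j) * u $ j) = kvec k D d \<bullet> u" if "u \<in> carrier_vec ?m" for u
      using D that by (auto simp: kvec_scalar_prod subset_iff intro!: sum.cong psd_kernel_sym[OF psd d])
    with \<open>i = ?m\<close> uq(1) ud(1) c show ?thesis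
      by (simp add: algebra_simps)
  qed
  finally show "(reg_gram k s2 (D @ [d]) *\<^sub>v ?w) $ i = kvec k (D @ [d]) q $ i"
    using i by (simp add: kvec_def)
qed (simp add: reg_gram_def gram_def kvec_def)

lemma post_cov_snoc:
  assumes psd: "psd_kernel X k" and s2: "s2 > 0" and D: "set D \<subseteq> X" and d: "d \<in> X"
    and p: "p \<in> X" and pivot: "post_cov k s2 D d d + s2 \<noteq> 0"
  shows "post_cov k s2 (D @ [d]) p q = post_cov k s2 D p q
           - post_cov k s2 D p d * post_cov k s2 D d q / (post_cov k s2 D d d + s2)"
proof -
  have kvec: "kvec k D y \<in> carrier_vec (length D)" for y
    by (simp add: kvec_def)
  note inv = det_reg_gram_nonzero[OF psd s2 D]
  obtain uq where uq: "uq \<in> carrier_vec (length D)" "reg_gram k s2 D *\<^sub>v uq = kvec k D q"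
    using mat_mult_vec_solvable[OF reg_gram_carrier inv kvec] .
  obtain ud where ud: "ud \<in> carrier_vec (length D)" "reg_gram k s2 D *\<^sub>v ud = kvec k D d"
    using mat_mult_vec_solvable[OF reg_gram_carrier inv kvec] .
  note post_q = post_cov_eq_solution[OF inv uq] and post_d = post_cov_eq_solution[OF inv ud]
  define c where "c = post_cov k s2 D d q / (post_cov k s2 D d d + s2)"
  have "c * (k d d - kvec k D d \<bullet> ud + s2) = k d q - kvec k D d \<bullet> uq"
    using pivot by (simp add: c_def post_q post_d)
  note sol = reg_gram_snoc_solution[OF psd D d uq ud this]
  have "post_cov k s2 (D @ [d]) p q
      = k p q - kvec k (D @ [d]) p \<bullet> vec (Suc (length D)) (\<lambda>i. if i < length D then uq $ i - c * ud $ i else c)"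
    using D d by (intro post_cov_eq_solution[OF det_reg_gram_nonzero[OF psd s2] _ sol]) auto
  also have "\<dots> = k p q - kvec k D p \<bullet> uq + c * (kvec k D p \<bullet> ud) - c * k d p"
    using uq(1) ud(1) by (simp add: kvec_scalar_prod nth_append sum_subtractf sum_distrib_left algebra_simps)
  also have "\<dots> = post_cov k s2 D p q - c * post_cov k s2 D p d"
    by (simp add: post_q post_d psd_kernel_sym[OF psd d p] algebra_simps)
  finally show ?thesis
    by (simp add: c_def)
qed

lemma post_cov_psd_kernel:
  assumes psd: "psd_kernel X k" and s2: "s2 > 0" and D: "set D \<subseteq> X"
  shows "psd_kernel X (post_cov k s2 D)"
  using D
proof (induction D rule: rev_induct)
  case Nil
  with psd show ?case
    by (simp add: post_cov_Nil)
next
  case (snoc d D)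
  hence D: "set D \<subseteq> X" and d: "d \<in> X" and IH: "psd_kernel X (post_cov k s2 D)"
    by auto
  have "0 \<le> post_cov k s2 D d d"
    by (rule psd_kernel_diag_nonneg[OF IH d])
  with s2 have le: "post_cov k s2 D d d \<le> post_cov k s2 D d d + s2"
    and pos: "0 < post_cov k s2 D d d + s2"
    by simp_all
  from psd_kernel_rank_one_update[OF IH d le pos] pos show ?case
    by (subst psd_kernel_cong[where K' = "\<lambda>x y. post_cov k s2 D x y
        - post_cov k s2 D x d * post_cov k s2 D d y / (post_cov k s2 D d d + s2)"])
      (simp_all add: post_cov_snoc[OF psd s2 D d])
qed

definition mi_mat :: "('a \<Rightarrow> 'a \<Rightarrow> real) \<Rightarrow> real \<Rightarrow> 'a list \<Rightarrow> 'a list \<Rightarrow> real mat" where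
  "mi_mat k s2 D A = 1\<^sub>m (length A) + (1 / s2) \<cdot>\<^sub>m
     mat (length A) (length A) (\<lambda>(i,j). post_cov k s2 D (A ! i) (A ! j))"

lemma cond_mi_eq_ln_det_mi_mat: "cond_mi k s2 A D = ln (det (mi_mat k s2 D A)) / 2"
  by (simp add: cond_mi_def mi_mat_def)

lemma det_mi_mat_Cons:
  assumes psd: "psd_kernel X k" and s2: "s2 > 0" and D: "set D \<subseteq> X" and a: "a \<in> X"
    and A: "set A \<subseteq> X"
  shows "det (mi_mat k s2 D (a # A))
    = (post_cov k s2 D a a + s2) / s2 * det (mi_mat k s2 (D @ [a]) A)"
proof -
  let ?P = "post_cov k s2 D" and ?n = "length A"
  define \<beta> where "\<beta> = ?P a a + s2"
  define f where "f = (\<lambda>(i,j). of_bool (i = j) + ?P ((a # A) ! i) ((a # A) ! j) / s2)"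
  have "?P a a \<ge> 0"
    by (rule psd_kernel_diag_nonneg[OF post_cov_psd_kernel[OF psd s2 D] a])
  hence pivot: "\<beta> > 0"
    using s2 unfolding \<beta>_def by linarith
  have f00: "f (0,0) = \<beta> / s2"
    using s2 by (simp add: f_def \<beta>_def field_simps)
  have "mat ?n ?n (\<lambda>(i,j). f (Suc i, Suc j) - f (Suc i, 0) * f (0, Suc j) / f (0,0))
      = mi_mat k s2 (D @ [a]) A"
  proof (rule eq_matI)
    fix i j assume "i < dim_row (mi_mat k s2 (D @ [a]) A)" "j < dim_col (mi_mat k s2 (D @ [a]) A)"
    hence i: "i < ?n" and j: "j < ?n"
      by (auto simp: mi_mat_def)
    have "f (Suc i, Suc j) - f (Suc i, 0) * f (0, Suc j) / f (0,0)
        = of_bool (i = j) + (?P (A!i) (A!j) - ?P (A!i) a * ?P a (A!j) / \<beta>) / s2"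
      unfolding f00 using pivot s2 by (simp add: f_def field_simps)
    also have "\<dots> = mi_mat k s2 (D @ [a]) A $$ (i,j)"
    proof -
      have "A ! i \<in> X"
        using i A by auto
      with pivot have "post_cov k s2 (D @ [a]) (A!i) (A!j) = ?P (A!i) (A!j) - ?P (A!i) a * ?P a (A!j) / \<beta>"
        by (simp add: post_cov_snoc[OF psd s2 D a] \<beta>_def)
      with i j show ?thesis
        by (simp add: mi_mat_def)
    qed
    finally show "mat ?n ?n (\<lambda>(i,j). f (Suc i, Suc j) - f (Suc i, 0) * f (0, Suc j) / f (0,0)) $$ (i,j)
        = mi_mat k s2 (D @ [a]) A $$ (i,j)"
      using i j by simp
  qed (auto simp: mi_mat_def)
  moreover have "mi_mat k s2 D (a # A) = mat (Suc ?n) (Suc ?n) f"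
    by (rule eq_matI) (auto simp: mi_mat_def f_def)
  ultimately show ?thesis
    using det_mat_Suc_schur_complement[of f ?n] f00 pivot s2 by (simp add: \<beta>_def)
qed

lemma det_mi_mat_ge_one:
  assumes psd: "psd_kernel X k" and s2: "s2 > 0"
  shows "set D \<subseteq> X \<Longrightarrow> set A \<subseteq> X \<Longrightarrow> 1 \<le> det (mi_mat k s2 D A)"
proof (induction A arbitrary: D)
  case Nil
  show ?case
    by (simp add: mi_mat_def)
next
  case (Cons a A)
  have "0 \<le> post_cov k s2 D a a"
    using Cons.prems by (intro psd_kernel_diag_nonneg[OF post_cov_psd_kernel[OF psd s2]]) auto
  with s2 have "1 \<le> (post_cov k s2 D a a + s2) / s2"
    by simp
  moreover have "1 \<le> det (mi_mat k s2 (D @ [a]) A)"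
    using Cons by simp
  ultimately have "1 * 1 \<le> (post_cov k s2 D a a + s2) / s2 * det (mi_mat k s2 (D @ [a]) A)"
    by (intro mult_mono) auto
  with Cons.prems show ?case
    by (simp add: det_mi_mat_Cons[OF psd s2])
qed

lemma post_var_le_snoc:
  assumes psd: "psd_kernel X k" and s2: "s2 > 0" and D: "set D \<subseteq> X" and a: "a \<in> X"
    and x: "x \<in> X"
  shows "post_cov k s2 D x x \<le> (post_cov k s2 D a a + s2) / s2 * post_cov k s2 (D @ [a]) x x"
proof -
  let ?P = "post_cov k s2 D"
  define \<beta> where "\<beta> = ?P a a + s2"
  have P: "psd_kernel X ?P"
    by (rule post_cov_psd_kernel[OF psd s2 D])
  have pivot: "\<beta> > 0"
    using psd_kernel_diag_nonneg[OF P a] s2 unfolding \<beta>_def by linarith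
  have "post_cov k s2 (D @ [a]) x x = ?P x x - ?P x a * ?P a x / \<beta>"
    using post_cov_snoc[OF psd s2 D a x] pivot by (simp add: \<beta>_def)
  hence "\<beta> / s2 * post_cov k s2 (D @ [a]) x x = (\<beta> * ?P x x - (?P x a)^2) / s2"
    using pivot s2 by (simp add: psd_kernel_sym[OF P a x] field_simps power2_eq_square)
  also have "\<dots> = ?P x x + (?P x x * ?P a a - (?P x a)^2) / s2"
    using s2 by (simp add: \<beta>_def field_simps)
  also have "\<dots> \<ge> ?P x x"
    using psd_kernel_cauchy_schwarz[OF P x a] s2 by simp
  finally show ?thesis
    by (simp add: \<beta>_def)
qed

lemma post_var_le_det_mi_mat:
  assumes psd: "psd_kernel X k" and s2: "s2 > 0" and x: "x \<in> X"
  shows "set D \<subseteq> X \<Longrightarrow> set A \<subseteq> X \<Longrightarrow>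
    post_cov k s2 D x x \<le> det (mi_mat k s2 D A) * post_cov k s2 (D @ A) x x"
proof (induction A arbitrary: D)
  case Nil
  show ?case
    by (simp add: mi_mat_def)
next
  case (Cons a A)
  hence D: "set D \<subseteq> X" and a: "a \<in> X" and A: "set A \<subseteq> X"
    by auto
  have "0 \<le> post_cov k s2 D a a"
    by (rule psd_kernel_diag_nonneg[OF post_cov_psd_kernel[OF psd s2 D] a])
  with s2 have factor: "0 \<le> (post_cov k s2 D a a + s2) / s2"
    by simp
  have "post_cov k s2 D x x \<le> (post_cov k s2 D a a + s2) / s2 * post_cov k s2 (D @ [a]) x x"
    by (rule post_var_le_snoc[OF psd s2 D a x])
  also have "\<dots> \<le> (post_cov k s2 D a a + s2) / s2
      * (det (mi_mat k s2 (D @ [a]) A) * post_cov k s2 (D @ [a] @ A) x x)"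
    using Cons.IH[of "D @ [a]"] D a A factor by (intro mult_left_mono) auto
  also have "\<dots> = det (mi_mat k s2 D (a # A)) * post_cov k s2 (D @ a # A) x x"
    by (simp add: det_mi_mat_Cons[OF psd s2 D a A])
  finally show ?case .
qed

lemma sqrt_div_sqrt_le:
  fixes a b c :: real
  assumes le: "a \<le> c^2 * b" and b: "0 \<le> b" and c: "0 \<le> c"
  shows "sqrt a / sqrt b \<le> c"
proof (cases "b = 0")
  case True
  with c show ?thesis by simp
next
  case False
  have "sqrt a \<le> c * sqrt b"
    using real_sqrt_le_mono[OF le] b c by (simp add: real_sqrt_mult)
  with False b show ?thesis
    by (simp add: divide_le_eq)
qed

lemma queries_append:
  assumes "m \<le> n"
  shows "queries xs n = queries xs m @ map xs [Suc m..<Suc n]"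
proof -
  have "[1..<Suc n] = [1..<Suc m] @ [Suc m..<Suc n]"
    using upt_add_eq_append[of 1 "Suc m" "n - m"] assms by simp
  then show ?thesis
    by (simp add: queries_def)
qed

theorem lemma5:
  fixes X :: "'a::real_normed_vector set"
    and k :: "'a \<Rightarrow> 'a \<Rightarrow> real"
    and \<sigma> :: real and B :: nat and C :: real
    and xs :: "nat \<Rightarrow> 'a" and fb :: "nat \<Rightarrow> nat"
  assumes "finite X"
    and "\<forall>x\<in>X. norm x \<le> 1"
    and "psd_kernel X k"
    and "\<sigma> > 0"
    and "B \<ge> 1"
    and "\<forall>t\<ge>1. xs t \<in> X"
    and "\<forall>t\<ge>1. fb t < t \<and> t - fb t \<le> B"
    and "\<forall>t\<ge>1. \<forall>A. set A \<subseteq> X \<and> length A \<le> B - 1 \<longrightarrow>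
            cond_mi k (\<sigma>\<^sup>2) A (queries xs (fb t)) \<le> C"
  shows "\<forall>t\<ge>1. \<forall>x\<in>X.
           post_sd k (\<sigma>\<^sup>2) (queries xs (fb t)) x / post_sd k (\<sigma>\<^sup>2) (queries xs (t - 1)) x \<le> exp C"
proof (intro allI impI ballI)
  fix t :: nat and x assume t: "t \<ge> 1" and x: "x \<in> X"
  define D where "D = queries xs (fb t)"
  define A where "A = map xs [Suc (fb t)..<t]"
  have s2: "\<sigma>\<^sup>2 > 0"
    using assms(4) by simp
  have fb: "fb t < t" "t - fb t \<le> B"
    using assms(7) t by auto
  with t have batch: "queries xs (t - 1) = D @ A"
    using queries_append[of "fb t" "t - 1" xs] by (simp add: D_def A_def)
  have DX: "set D \<subseteq> X" and AX: "set A \<subseteq> X"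
    using assms(6) by (auto simp: D_def A_def queries_def)
  have var_nonneg: "0 \<le> post_cov k (\<sigma>\<^sup>2) (D @ A) x x"
    using DX AX by (intro psd_kernel_diag_nonneg[OF post_cov_psd_kernel[OF assms(3) s2] x]) auto
  have "cond_mi k (\<sigma>\<^sup>2) A D \<le> C"
    using assms(8) t AX fb by (simp add: D_def A_def)
  moreover have "det (mi_mat k (\<sigma>\<^sup>2) D A) = exp (2 * cond_mi k (\<sigma>\<^sup>2) A D)"
    using det_mi_mat_ge_one[OF assms(3) s2 DX AX] by (simp add: cond_mi_eq_ln_det_mi_mat)
  ultimately have det_le: "det (mi_mat k (\<sigma>\<^sup>2) D A) \<le> (exp C)^2"
    by (simp flip: exp_double)
  have "post_cov k (\<sigma>\<^sup>2) D x x \<le> det (mi_mat k (\<sigma>\<^sup>2) D A) * post_cov k (\<sigma>\<^sup>2) (D @ A) x x"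
    by (rule post_var_le_det_mi_mat[OF assms(3) s2 x DX AX])
  also have "\<dots> \<le> (exp C)^2 * post_cov k (\<sigma>\<^sup>2) (D @ A) x x"
    using det_le var_nonneg by (rule mult_right_mono)
  finally show "post_sd k (\<sigma>\<^sup>2) (queries xs (fb t)) x / post_sd k (\<sigma>\<^sup>2) (queries xs (t - 1)) x \<le> exp C"
    unfolding post_sd_def batch D_def[symmetric]
    using var_nonneg by (intro sqrt_div_sqrt_le) auto
qed

end
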